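(* Let $(A,\mu,\Delta_r,\alpha,\beta,\psi=\beta,\omega=\alpha)$ be a quasitriangular infinitesimal BiHom-bialgebra with $r=\sum_i x_i\otimes y_i\in A\otimes A$, and write $\Delta=\Delta_r$. Then: (i) $\Delta(a)=\sum_i\alpha(x_i)\otimes y_i\cdot a-\sum_i a\cdot x_i\otimes\beta(y_i)$ for all $a\in A$; (ii) $(\Delta\otimes\beta)(r)=r_{23}r_{13}$; (iii) $(\alpha\otimes\Delta)(r)=-r_{13}r_{12}$. Conversely, if an infinitesimal BiHom-bialgebra $(A,\mu,\Delta,\alpha,\beta,\psi=\beta,\omega=\alpha)$ satisfies (i), (ii) and (iii) for some $r=\sum_i x_i\otimes y_i\in A\otimes A$ with $(\alpha\otimes\alpha)(r)=r=(\beta\otimes\beta)(r)$, then $\Delta=\Delta_r$ and $(A,\mu,\Delta_r,\alpha,\beta,\psi=\beta,\omega=\alpha)$ is a quasitriangular infinitesimal BiHom-bialgebra.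
   Context: Work over a field. A BiHom-associative algebra is a 4-tuple $(A,\mu,\alpha,\beta)$ with $\alpha,\beta$ commuting linear maps, multiplicative for $\mu$ (written $a\cdot b$), and $\alpha(x)\cdot(y\cdot z)=(x\cdot y)\cdot\beta(z)$. A BiHom-coassociative coalgebra is $(C,\Delta,\psi,\omega)$ with $\psi\omega=\omega\psi$, $(\psi\otimes\psi)\Delta=\Delta\psi$, $(\omega\otimes\omega)\Delta=\Delta\omega$ and $(\Delta\otimes\psi)\Delta=(\omega\otimes\Delta)\Delta$. An infinitesimal BiHom-bialgebra is a 7-tuple $(A,\mu,\Delta,\alpha,\beta,\psi,\omega)$ with $(A,\mu,\alpha,\beta)$ BiHom-associative, $(A,\Delta,\psi,\omega)$ BiHom-coassociative, and for all $a,b$ (with $\Delta(a)=a_1\otimes a_2$): $\Delta(a\cdot b)=\omega(a)\cdot b_1\otimes\beta(b_2)+\alpha(a_1)\otimes a_2\cdot\psi(b)$; $\alpha,\beta$ each commute with $\psi,\omega$; $(\alpha\otimes\alpha)\Delta=\Delta\alpha$, $(\beta\otimes\beta)\Delta=\Delta\beta$; $\psi,\omega$ multiplicative. For $r=\sum_i x_i\otimes y_i$ with $(\alpha\otimes\alpha)(r)=r=(\beta\otimes\beta)(r)$, set $\Delta_r(a)=\sum_i\alpha(x_i)\otimes y_i\cdot a-\sum_i a\cdot x_i\otimes\beta(y_i)$, $r_{12}r_{23}=\sum_{i,j}\alpha(x_i)\otimes y_i\cdot x_j\otimes\beta(y_j)$, $r_{13}r_{12}=\sum_{i,j}x_i\cdot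 x_j\otimes\beta(y_j)\otimes\beta(y_i)$, $r_{23}r_{13}=\sum_{i,j}\alpha(x_i)\otimes\alpha(x_j)\otimes y_j\cdot y_i$, and $A(r)=r_{13}r_{12}-r_{12}r_{23}+r_{23}r_{13}$. Actions on $A^{\otimes3}$: $a\bullet(x\otimes y\otimes z)=\alpha(a)\cdot x\otimes\beta(y)\otimes\beta(z)$, $(x\otimes y\otimes z)\bullet a=\alpha(x)\otimes\alpha(y)\otimes z\cdot\beta(a)$. A coboundary infinitesimal BiHom-bialgebra is $(A,\mu,\Delta_r,\alpha,\beta,\psi=\beta,\omega=\alpha)$ where $(A,\mu,\alpha,\beta)$ is BiHom-associative and $r$ satisfies $(\alpha\otimes\alpha)(r)=r=(\beta\otimes\beta)(r)$ and $a\bullet A(r)=A(r)\bullet a$ for all $a$ (such a tuple is an infinitesimal BiHom-bialgebra). It is quasitriangular if moreover $A(r)=0$. *)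

theory Defs
  imports Complex_Main
begin

text \<open>An element of A (x) A is represented by a finite formal sum, i.e. a list of pairs
  [(x1,y1),...] standing for sum_i xi (x) yi; similarly for A (x) A (x) A with triples.
  Two such representatives denote the same tensor iff every bilinear (resp. trilinear)
  scalar-valued form takes the same value on them (over a field the multilinear forms
  separate points of the tensor product, so this is exactly equality in A (x) A).\<close>

type_synonym 'a tensor2 = "('a \<times> 'a) list"
type_synonym 'a tensor3 = "('a \<times> 'a \<times> 'a) list"

definition bilin_form :: "('k::field \<Rightarrow> 'a::ab_group_add \<Rightarrow> 'a) \<Rightarrow> ('a \<Rightarrow> 'a \<Rightarrow> 'k) \<Rightarrow> bool" where
  "bilin_form scale f \<longleftrightarrow>
     (\<forall>x x' y. f (x + x') y = f x y + f x' y) \<and> (\<forall>x y y'. f x (y + y') = f x y + f x y') \<and>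
     (\<forall>c x y. f (scale c x) y = c * f x y) \<and> (\<forall>c x y. f x (scale c y) = c * f x y)"

definition trilin_form :: "('k::field \<Rightarrow> 'a::ab_group_add \<Rightarrow> 'a) \<Rightarrow> ('a \<Rightarrow> 'a \<Rightarrow> 'a \<Rightarrow> 'k) \<Rightarrow> bool" where
  "trilin_form scale f \<longleftrightarrow>
     (\<forall>x x' y z. f (x + x') y z = f x y z + f x' y z) \<and>
     (\<forall>x y y' z. f x (y + y') z = f x y z + f x y' z) \<and>
     (\<forall>x y z z'. f x y (z + z') = f x y z + f x y z') \<and>
     (\<forall>c x y z. f (scale c x) y z = c * f x y z) \<and>
     (\<forall>c x y z. f x (scale c y) z = c * f x y z) \<and>
     (\<forall>c x y z. f x y (scale c z) = c * f x y z)"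

definition teq2 :: "('k::field \<Rightarrow> 'a::ab_group_add \<Rightarrow> 'a) \<Rightarrow> 'a tensor2 \<Rightarrow> 'a tensor2 \<Rightarrow> bool" where
  "teq2 scale t s \<longleftrightarrow> (\<forall>f. bilin_form scale f \<longrightarrow>
     (\<Sum>(x,y)\<leftarrow>t. f x y) = (\<Sum>(x,y)\<leftarrow>s. f x y))"

definition teq3 :: "('k::field \<Rightarrow> 'a::ab_group_add \<Rightarrow> 'a) \<Rightarrow> 'a tensor3 \<Rightarrow> 'a tensor3 \<Rightarrow> bool" where
  "teq3 scale t s \<longleftrightarrow> (\<forall>f. trilin_form scale f \<longrightarrow>
     (\<Sum>(x,y,z)\<leftarrow>t. f x y z) = (\<Sum>(x,y,z)\<leftarrow>s. f x y z))"

definition neg2 :: "('k::field \<Rightarrow> 'a \<Rightarrow> 'a) \<Rightarrow> 'a tensor2 \<Rightarrow> 'a tensor2" where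
  "neg2 scale t = [(scale (-1) x, y). (x,y) \<leftarrow> t]"

definition neg3 :: "('k::field \<Rightarrow> 'a \<Rightarrow> 'a) \<Rightarrow> 'a tensor3 \<Rightarrow> 'a tensor3" where
  "neg3 scale t = [(scale (-1) x, y, z). (x,y,z) \<leftarrow> t]"

definition tmap2 :: "('a \<Rightarrow> 'a) \<Rightarrow> ('a \<Rightarrow> 'a) \<Rightarrow> 'a tensor2 \<Rightarrow> 'a tensor2" where
  "tmap2 f g t = [(f x, g y). (x,y) \<leftarrow> t]"

definition D_tensor_map :: "('a \<Rightarrow> 'a tensor2) \<Rightarrow> ('a \<Rightarrow> 'a) \<Rightarrow> 'a tensor2 \<Rightarrow> 'a tensor3" where
  "D_tensor_map D g t = concat [[(p, q, g y). (p,q) \<leftarrow> D x]. (x,y) \<leftarrow> t]"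

definition map_tensor_D :: "('a \<Rightarrow> 'a) \<Rightarrow> ('a \<Rightarrow> 'a tensor2) \<Rightarrow> 'a tensor2 \<Rightarrow> 'a tensor3" where
  "map_tensor_D g D t = concat [[(g x, p, q). (p,q) \<leftarrow> D y]. (x,y) \<leftarrow> t]"

definition multiplicative :: "('a \<Rightarrow> 'a \<Rightarrow> 'a) \<Rightarrow> ('a \<Rightarrow> 'a) \<Rightarrow> bool" where
  "multiplicative mu f \<longleftrightarrow> (\<forall>x y. f (mu x y) = mu (f x) (f y))"

definition bilinear_map :: "('k::field \<Rightarrow> 'a::ab_group_add \<Rightarrow> 'a) \<Rightarrow> ('a \<Rightarrow> 'a \<Rightarrow> 'a) \<Rightarrow> bool" where
  "bilinear_map scale mu \<longleftrightarrow>
     (\<forall>x. Vector_Spaces.linear scale scale (mu x)) \<and> (\<forall>y. Vector_Spaces.linear scale scale (\<lambda>x. mu x y))"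

definition bihom_assoc_alg :: "('k::field \<Rightarrow> 'a::ab_group_add \<Rightarrow> 'a) \<Rightarrow> ('a \<Rightarrow> 'a \<Rightarrow> 'a)
    \<Rightarrow> ('a \<Rightarrow> 'a) \<Rightarrow> ('a \<Rightarrow> 'a) \<Rightarrow> bool" where
  "bihom_assoc_alg scale mu alpha beta \<longleftrightarrow>
     vector_space scale \<and> bilinear_map scale mu \<and>
     Vector_Spaces.linear scale scale alpha \<and> Vector_Spaces.linear scale scale beta \<and>
     alpha \<circ> beta = beta \<circ> alpha \<and> multiplicative mu alpha \<and> multiplicative mu beta \<and>
     (\<forall>x y z. mu (alpha x) (mu y z) = mu (mu x y) (beta z))"

definition linear_D :: "('k::field \<Rightarrow> 'a::ab_group_add \<Rightarrow> 'a) \<Rightarrow> ('a \<Rightarrow> 'a tensor2) \<Rightarrow> bool" where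
  "linear_D scale D \<longleftrightarrow>
     (\<forall>x y. teq2 scale (D (x + y)) (D x @ D y)) \<and>
     (\<forall>c x. teq2 scale (D (scale c x)) [(scale c p, q). (p,q) \<leftarrow> D x])"

definition bihom_coassoc_coalg :: "('k::field \<Rightarrow> 'a::ab_group_add \<Rightarrow> 'a) \<Rightarrow> ('a \<Rightarrow> 'a tensor2)
    \<Rightarrow> ('a \<Rightarrow> 'a) \<Rightarrow> ('a \<Rightarrow> 'a) \<Rightarrow> bool" where
  "bihom_coassoc_coalg scale Delta psi omega \<longleftrightarrow>
     vector_space scale \<and> linear_D scale Delta \<and>
     Vector_Spaces.linear scale scale psi \<and> Vector_Spaces.linear scale scale omega \<and>
     psi \<circ> omega = omega \<circ> psi \<and>
     (\<forall>a. teq2 scale (tmap2 psi psi (Delta a)) (Delta (psi a))) \<and>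
     (\<forall>a. teq2 scale (tmap2 omega omega (Delta a)) (Delta (omega a))) \<and>
     (\<forall>a. teq3 scale (D_tensor_map Delta psi (Delta a)) (map_tensor_D omega Delta (Delta a)))"

definition inf_bihom_bialg :: "('k::field \<Rightarrow> 'a::ab_group_add \<Rightarrow> 'a) \<Rightarrow> ('a \<Rightarrow> 'a \<Rightarrow> 'a)
    \<Rightarrow> ('a \<Rightarrow> 'a tensor2) \<Rightarrow> ('a \<Rightarrow> 'a) \<Rightarrow> ('a \<Rightarrow> 'a) \<Rightarrow> ('a \<Rightarrow> 'a) \<Rightarrow> ('a \<Rightarrow> 'a) \<Rightarrow> bool" where
  "inf_bihom_bialg scale mu Delta alpha beta psi omega \<longleftrightarrow>
     bihom_assoc_alg scale mu alpha beta \<and> bihom_coassoc_coalg scale Delta psi omega \<and>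
     (\<forall>a b. teq2 scale (Delta (mu a b))
        ([(mu (omega a) b1, beta b2). (b1,b2) \<leftarrow> Delta b] @
         [(alpha a1, mu a2 (psi b)). (a1,a2) \<leftarrow> Delta a])) \<and>
     alpha \<circ> psi = psi \<circ> alpha \<and> alpha \<circ> omega = omega \<circ> alpha \<and>
     beta \<circ> psi = psi \<circ> beta \<and> beta \<circ> omega = omega \<circ> beta \<and>
     (\<forall>a. teq2 scale (tmap2 alpha alpha (Delta a)) (Delta (alpha a))) \<and>
     (\<forall>a. teq2 scale (tmap2 beta beta (Delta a)) (Delta (beta a))) \<and>
     multiplicative mu psi \<and> multiplicative mu omega"

definition Delta_r :: "('k::field \<Rightarrow> 'a \<Rightarrow> 'a) \<Rightarrow> ('a \<Rightarrow> 'a \<Rightarrow> 'a) \<Rightarrow> ('a \<Rightarrow> 'a) \<Rightarrow> ('a \<Rightarrow> 'a)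
    \<Rightarrow> 'a tensor2 \<Rightarrow> 'a \<Rightarrow> 'a tensor2" where
  "Delta_r scale mu alpha beta r a =
     [(alpha x, mu y a). (x,y) \<leftarrow> r] @ neg2 scale [(mu a x, beta y). (x,y) \<leftarrow> r]"

definition r12r23 :: "('a \<Rightarrow> 'a \<Rightarrow> 'a) \<Rightarrow> ('a \<Rightarrow> 'a) \<Rightarrow> ('a \<Rightarrow> 'a) \<Rightarrow> 'a tensor2 \<Rightarrow> 'a tensor3" where
  "r12r23 mu alpha beta r = [(alpha xi, mu yi xj, beta yj). (xi,yi) \<leftarrow> r, (xj,yj) \<leftarrow> r]"

definition r13r12 :: "('a \<Rightarrow> 'a \<Rightarrow> 'a) \<Rightarrow> ('a \<Rightarrow> 'a) \<Rightarrow> ('a \<Rightarrow> 'a) \<Rightarrow> 'a tensor2 \<Rightarrow> 'a tensor3" where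
  "r13r12 mu alpha beta r = [(mu xi xj, beta yj, beta yi). (xi,yi) \<leftarrow> r, (xj,yj) \<leftarrow> r]"

definition r23r13 :: "('a \<Rightarrow> 'a \<Rightarrow> 'a) \<Rightarrow> ('a \<Rightarrow> 'a) \<Rightarrow> ('a \<Rightarrow> 'a) \<Rightarrow> 'a tensor2 \<Rightarrow> 'a tensor3" where
  "r23r13 mu alpha beta r = [(alpha xi, alpha xj, mu yj yi). (xi,yi) \<leftarrow> r, (xj,yj) \<leftarrow> r]"

definition A_r :: "('k::field \<Rightarrow> 'a \<Rightarrow> 'a) \<Rightarrow> ('a \<Rightarrow> 'a \<Rightarrow> 'a) \<Rightarrow> ('a \<Rightarrow> 'a) \<Rightarrow> ('a \<Rightarrow> 'a)
    \<Rightarrow> 'a tensor2 \<Rightarrow> 'a tensor3" where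
  "A_r scale mu alpha beta r =
     r13r12 mu alpha beta r @ neg3 scale (r12r23 mu alpha beta r) @ r23r13 mu alpha beta r"

definition act_left :: "('a \<Rightarrow> 'a \<Rightarrow> 'a) \<Rightarrow> ('a \<Rightarrow> 'a) \<Rightarrow> ('a \<Rightarrow> 'a) \<Rightarrow> 'a \<Rightarrow> 'a tensor3 \<Rightarrow> 'a tensor3" where
  "act_left mu alpha beta a t = [(mu (alpha a) x, beta y, beta z). (x,y,z) \<leftarrow> t]"

definition act_right :: "('a \<Rightarrow> 'a \<Rightarrow> 'a) \<Rightarrow> ('a \<Rightarrow> 'a) \<Rightarrow> ('a \<Rightarrow> 'a) \<Rightarrow> 'a tensor3 \<Rightarrow> 'a \<Rightarrow> 'a tensor3" where
  "act_right mu alpha beta t a = [(alpha x, alpha y, mu z (beta a)). (x,y,z) \<leftarrow> t]"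

definition r_invariant :: "('k::field \<Rightarrow> 'a::ab_group_add \<Rightarrow> 'a) \<Rightarrow> ('a \<Rightarrow> 'a) \<Rightarrow> ('a \<Rightarrow> 'a) \<Rightarrow> 'a tensor2 \<Rightarrow> bool" where
  "r_invariant scale alpha beta r \<longleftrightarrow>
     teq2 scale (tmap2 alpha alpha r) r \<and> teq2 scale (tmap2 beta beta r) r"

definition coboundary_ibhb :: "('k::field \<Rightarrow> 'a::ab_group_add \<Rightarrow> 'a) \<Rightarrow> ('a \<Rightarrow> 'a \<Rightarrow> 'a)
    \<Rightarrow> ('a \<Rightarrow> 'a) \<Rightarrow> ('a \<Rightarrow> 'a) \<Rightarrow> 'a tensor2 \<Rightarrow> bool" where
  "coboundary_ibhb scale mu alpha beta r \<longleftrightarrow>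
     bihom_assoc_alg scale mu alpha beta \<and> r_invariant scale alpha beta r \<and>
     (\<forall>a. teq3 scale (act_left mu alpha beta a (A_r scale mu alpha beta r))
                      (act_right mu alpha beta (A_r scale mu alpha beta r) a))"

definition quasitriangular_ibhb :: "('k::field \<Rightarrow> 'a::ab_group_add \<Rightarrow> 'a) \<Rightarrow> ('a \<Rightarrow> 'a \<Rightarrow> 'a)
    \<Rightarrow> ('a \<Rightarrow> 'a) \<Rightarrow> ('a \<Rightarrow> 'a) \<Rightarrow> 'a tensor2 \<Rightarrow> bool" where
  "quasitriangular_ibhb scale mu alpha beta r \<longleftrightarrow>
     coboundary_ibhb scale mu alpha beta r \<and> teq3 scale (A_r scale mu alpha beta r) []"

end

theory Submission
  imports Defs
begin

text \<open>Everything reduces to an identity between formal sums: evaluated on any trilinear form,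
  (Delta_r (x) beta)(r) becomes r12r23 - r13r12 and (alpha (x) Delta_r)(r) becomes r23r13 - r12r23.
  Hence each of (ii) and (iii) is equivalent to A(r) = 0, which in turn makes the
  compatibility condition a . A(r) = A(r) . a trivial.\<close>

lemma linear_add_scale:
  assumes "Vector_Spaces.linear s s f"
  shows "f (x + y) = f x + f y" "f (s c x) = s c (f x)"
  using assms unfolding linear_iff_module_hom module_hom_iff by auto

lemma sum_list_swap:
  fixes g :: "_ \<Rightarrow> _ \<Rightarrow> 'b::comm_monoid_add"
  shows "(\<Sum>x\<leftarrow>xs. \<Sum>y\<leftarrow>ys. g x y) = (\<Sum>y\<leftarrow>ys. \<Sum>x\<leftarrow>xs. g x y)"
  by (induction xs) (simp_all add: sum_list_addf)

lemma sum_list_map_concat: "(\<Sum>x\<leftarrow>concat xss. f x) = (\<Sum>xs\<leftarrow>xss. \<Sum>x\<leftarrow>xs. f x)"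
  by (induction xss) auto

lemma teq3_sym: "teq3 scale t s \<Longrightarrow> teq3 scale s t"
  unfolding teq3_def by simp

lemma teq3_trans: "teq3 scale t s \<Longrightarrow> teq3 scale s u \<Longrightarrow> teq3 scale t u"
  unfolding teq3_def by simp

lemma teq3_zeroD: "teq3 scale t [] \<Longrightarrow> trilin_form scale f \<Longrightarrow> (\<Sum>(x,y,z)\<leftarrow>t. f x y z) = 0"
  unfolding teq3_def by auto

lemma sum_list_neg3:
  assumes "trilin_form scale f"
  shows "(\<Sum>(x,y,z)\<leftarrow>neg3 scale t. f x y z) = - (\<Sum>(x,y,z)\<leftarrow>t. f x y z)"
  using assms unfolding neg3_def trilin_form_def by (induction t) auto

lemma sum_list_D_tensor_map:
  "(\<Sum>(x,y,z)\<leftarrow>D_tensor_map D g t. f x y z) = (\<Sum>(x,y)\<leftarrow>t. \<Sum>(p,q)\<leftarrow>D x. f p q (g y))"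
  unfolding D_tensor_map_def by (simp add: sum_list_map_concat split_def comp_def)

lemma sum_list_map_tensor_D:
  "(\<Sum>(x,y,z)\<leftarrow>map_tensor_D g D t. f x y z) = (\<Sum>(x,y)\<leftarrow>t. \<Sum>(p,q)\<leftarrow>D y. f (g x) p q)"
  unfolding map_tensor_D_def by (simp add: sum_list_map_concat split_def comp_def)

lemma sum_list_r12r23:
  "(\<Sum>(x,y,z)\<leftarrow>r12r23 mu alpha beta r. f x y z)
     = (\<Sum>(xi,yi)\<leftarrow>r. \<Sum>(xj,yj)\<leftarrow>r. f (alpha xi) (mu yi xj) (beta yj))"
  unfolding r12r23_def by (simp add: sum_list_map_concat split_def comp_def)

lemma sum_list_r13r12:
  "(\<Sum>(x,y,z)\<leftarrow>r13r12 mu alpha beta r. f x y z)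
     = (\<Sum>(xi,yi)\<leftarrow>r. \<Sum>(xj,yj)\<leftarrow>r. f (mu xi xj) (beta yj) (beta yi))"
  unfolding r13r12_def by (simp add: sum_list_map_concat split_def comp_def)

lemma sum_list_r23r13:
  "(\<Sum>(x,y,z)\<leftarrow>r23r13 mu alpha beta r. f x y z)
     = (\<Sum>(xi,yi)\<leftarrow>r. \<Sum>(xj,yj)\<leftarrow>r. f (alpha xi) (alpha xj) (mu yj yi))"
  unfolding r23r13_def by (simp add: sum_list_map_concat split_def comp_def)

lemma sum_list_A_r:
  assumes "trilin_form scale f"
  shows "(\<Sum>(x,y,z)\<leftarrow>A_r scale mu alpha beta r. f x y z)
     = (\<Sum>(x,y,z)\<leftarrow>r13r12 mu alpha beta r. f x y z) - (\<Sum>(x,y,z)\<leftarrow>r12r23 mu alpha beta r. f x y z)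
       + (\<Sum>(x,y,z)\<leftarrow>r23r13 mu alpha beta r. f x y z)"
  unfolding A_r_def by (simp add: sum_list_neg3[OF assms])

lemma sum_list_Delta_r:
  fixes h :: "_ \<Rightarrow> _ \<Rightarrow> 'c::ab_group_add"
  assumes "\<And>p q. h (scale (-1) p) q = - h p q"
  shows "(\<Sum>(p,q)\<leftarrow>Delta_r scale mu alpha beta r a. h p q)
     = (\<Sum>(x,y)\<leftarrow>r. h (alpha x) (mu y a)) - (\<Sum>(x,y)\<leftarrow>r. h (mu a x) (beta y))"
  unfolding Delta_r_def neg2_def by (induction r) (auto simp: assms)

lemma sum_list_D_tensor_map_Delta_r:
  assumes f: "trilin_form scale f"
  shows "(\<Sum>(x,y,z)\<leftarrow>D_tensor_map (Delta_r scale mu alpha beta r) beta r. f x y z)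
     = (\<Sum>(x,y,z)\<leftarrow>r12r23 mu alpha beta r. f x y z) - (\<Sum>(x,y,z)\<leftarrow>r13r12 mu alpha beta r. f x y z)"
proof -
  have "(\<Sum>(p,q)\<leftarrow>Delta_r scale mu alpha beta r a. f p q w)
     = (\<Sum>(x,y)\<leftarrow>r. f (alpha x) (mu y a) w) - (\<Sum>(x,y)\<leftarrow>r. f (mu a x) (beta y) w)" for a w
    by (rule sum_list_Delta_r) (use f in \<open>simp add: trilin_form_def\<close>)
  then have "(\<Sum>(x,y,z)\<leftarrow>D_tensor_map (Delta_r scale mu alpha beta r) beta r. f x y z)
     = (\<Sum>(x,y)\<leftarrow>r. \<Sum>(xj,yj)\<leftarrow>r. f (alpha xj) (mu yj x) (beta y))
       - (\<Sum>(x,y)\<leftarrow>r. \<Sum>(xj,yj)\<leftarrow>r. f (mu x xj) (beta yj) (beta y))"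
    unfolding sum_list_D_tensor_map by (simp add: split_def sum_list_subtractf)
  also have "(\<Sum>(x,y)\<leftarrow>r. \<Sum>(xj,yj)\<leftarrow>r. f (alpha xj) (mu yj x) (beta y))
      = (\<Sum>(xi,yi)\<leftarrow>r. \<Sum>(xj,yj)\<leftarrow>r. f (alpha xi) (mu yi xj) (beta yj))"
    using sum_list_swap[of "\<lambda>(x,y) (xj,yj). f (alpha xj) (mu yj x) (beta y)" r r]
    by (simp add: split_def)
  finally show ?thesis by (simp add: sum_list_r12r23 sum_list_r13r12)
qed

lemma sum_list_map_tensor_D_Delta_r:
  assumes f: "trilin_form scale f"
  shows "(\<Sum>(x,y,z)\<leftarrow>map_tensor_D alpha (Delta_r scale mu alpha beta r) r. f x y z)
     = (\<Sum>(x,y,z)\<leftarrow>r23r13 mu alpha beta r. f x y z) - (\<Sum>(x,y,z)\<leftarrow>r12r23 mu alpha beta r. f x y z)"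
proof -
  have "(\<Sum>(p,q)\<leftarrow>Delta_r scale mu alpha beta r a. f w p q)
     = (\<Sum>(x,y)\<leftarrow>r. f w (alpha x) (mu y a)) - (\<Sum>(x,y)\<leftarrow>r. f w (mu a x) (beta y))" for a w
    by (rule sum_list_Delta_r) (use f in \<open>simp add: trilin_form_def\<close>)
  then show ?thesis
    unfolding sum_list_map_tensor_D sum_list_r23r13 sum_list_r12r23
    by (simp add: split_def sum_list_subtractf)
qed

lemma A_r_zero_iff_D_tensor_map_Delta_r:
  "teq3 scale (A_r scale mu alpha beta r) [] \<longleftrightarrow>
   teq3 scale (D_tensor_map (Delta_r scale mu alpha beta r) beta r) (r23r13 mu alpha beta r)"
  unfolding teq3_def
  by (auto simp: sum_list_A_r sum_list_D_tensor_map_Delta_r algebra_simps)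

lemma A_r_zero_iff_map_tensor_D_Delta_r:
  "teq3 scale (A_r scale mu alpha beta r) [] \<longleftrightarrow>
   teq3 scale (map_tensor_D alpha (Delta_r scale mu alpha beta r) r) (neg3 scale (r13r12 mu alpha beta r))"
  unfolding teq3_def
  by (auto simp: sum_list_A_r sum_list_map_tensor_D_Delta_r sum_list_neg3 algebra_simps)

lemma teq3_D_tensor_map_cong:
  assumes "\<And>x. teq2 scale (D x) (D' x)"
  shows "teq3 scale (D_tensor_map D g t) (D_tensor_map D' g t)"
  unfolding teq3_def sum_list_D_tensor_map
proof (intro allI impI)
  fix f assume "trilin_form scale f"
  then have "bilin_form scale (\<lambda>p q. f p q w)" for w
    unfolding trilin_form_def bilin_form_def by simp
  then have "(\<Sum>(p,q)\<leftarrow>D x. f p q w) = (\<Sum>(p,q)\<leftarrow>D' x. f p q w)" for x w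
    using assms[of x] unfolding teq2_def by blast
  then show "(\<Sum>(x,y)\<leftarrow>t. \<Sum>(p,q)\<leftarrow>D x. f p q (g y)) = (\<Sum>(x,y)\<leftarrow>t. \<Sum>(p,q)\<leftarrow>D' x. f p q (g y))"
    by simp
qed

lemma act_left_eq_act_right_if_zero:
  assumes alg: "bihom_assoc_alg scale mu alpha beta" and zero: "teq3 scale t []"
  shows "teq3 scale (act_left mu alpha beta a t) (act_right mu alpha beta t a)"
  unfolding teq3_def
proof (intro allI impI)
  fix f assume f: "trilin_form scale f"
  from alg have "\<And>x. Vector_Spaces.linear scale scale (mu x)"
    and "\<And>y. Vector_Spaces.linear scale scale (\<lambda>x. mu x y)"
    and "Vector_Spaces.linear scale scale alpha" "Vector_Spaces.linear scale scale beta"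
    unfolding bihom_assoc_alg_def bilinear_map_def by auto
  note lin = linear_add_scale[OF this(1)] linear_add_scale[OF this(2)]
    linear_add_scale[OF this(3)] linear_add_scale[OF this(4)]
  have "trilin_form scale (\<lambda>x y z. f (mu (alpha a) x) (beta y) (beta z))"
    and "trilin_form scale (\<lambda>x y z. f (alpha x) (alpha y) (mu z (beta a)))"
    using f unfolding trilin_form_def by (simp_all add: lin)
  from this[THEN teq3_zeroD[OF zero]]
  show "(\<Sum>(x,y,z)\<leftarrow>act_left mu alpha beta a t. f x y z) = (\<Sum>(x,y,z)\<leftarrow>act_right mu alpha beta t a. f x y z)"
    unfolding act_left_def act_right_def by (simp add: split_def comp_def)
qed

lemma quasitriangular_ibhbI:
  assumes "bihom_assoc_alg scale mu alpha beta" "r_invariant scale alpha beta r"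
    and "teq3 scale (A_r scale mu alpha beta r) []"
  shows "quasitriangular_ibhb scale mu alpha beta r"
  using assms act_left_eq_act_right_if_zero[OF assms(1,3)]
  unfolding quasitriangular_ibhb_def coboundary_ibhb_def by blast

theorem proposition5p8:
  fixes scale :: "'k::field \<Rightarrow> 'a::ab_group_add \<Rightarrow> 'a"
    and mu :: "'a \<Rightarrow> 'a \<Rightarrow> 'a" and alpha beta :: "'a \<Rightarrow> 'a"
    and r :: "'a tensor2" and Delta :: "'a \<Rightarrow> 'a tensor2"
  shows
    "(quasitriangular_ibhb scale mu alpha beta r \<longrightarrow>
       (\<forall>a. teq2 scale (Delta_r scale mu alpha beta r a)
              ([(alpha x, mu y a). (x,y) \<leftarrow> r] @ neg2 scale [(mu a x, beta y). (x,y) \<leftarrow> r])) \<and>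
       teq3 scale (D_tensor_map (Delta_r scale mu alpha beta r) beta r) (r23r13 mu alpha beta r) \<and>
       teq3 scale (map_tensor_D alpha (Delta_r scale mu alpha beta r) r)
                  (neg3 scale (r13r12 mu alpha beta r))) \<and>
     (inf_bihom_bialg scale mu Delta alpha beta beta alpha \<and> r_invariant scale alpha beta r \<and>
     (\<forall>a. teq2 scale (Delta a)
            ([(alpha x, mu y a). (x,y) \<leftarrow> r] @ neg2 scale [(mu a x, beta y). (x,y) \<leftarrow> r])) \<and>
     teq3 scale (D_tensor_map Delta beta r) (r23r13 mu alpha beta r) \<and>
     teq3 scale (map_tensor_D alpha Delta r) (neg3 scale (r13r12 mu alpha beta r))
     \<longrightarrow> (\<forall>a. teq2 scale (Delta a) (Delta_r scale mu alpha beta r a)) \<and>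
         quasitriangular_ibhb scale mu alpha beta r)"
proof (intro conjI impI)
  assume "quasitriangular_ibhb scale mu alpha beta r"
  then have zero: "teq3 scale (A_r scale mu alpha beta r) []"
    unfolding quasitriangular_ibhb_def by simp
  show "\<forall>a. teq2 scale (Delta_r scale mu alpha beta r a)
              ([(alpha x, mu y a). (x,y) \<leftarrow> r] @ neg2 scale [(mu a x, beta y). (x,y) \<leftarrow> r])"
    by (simp add: teq2_def Delta_r_def)
  show "teq3 scale (D_tensor_map (Delta_r scale mu alpha beta r) beta r) (r23r13 mu alpha beta r)"
    using zero by (simp add: A_r_zero_iff_D_tensor_map_Delta_r)
  show "teq3 scale (map_tensor_D alpha (Delta_r scale mu alpha beta r) r)
          (neg3 scale (r13r12 mu alpha beta r))"
    using zero by (simp add: A_r_zero_iff_map_tensor_D_Delta_r)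
next
  assume H: "inf_bihom_bialg scale mu Delta alpha beta beta alpha \<and> r_invariant scale alpha beta r \<and>
     (\<forall>a. teq2 scale (Delta a)
            ([(alpha x, mu y a). (x,y) \<leftarrow> r] @ neg2 scale [(mu a x, beta y). (x,y) \<leftarrow> r])) \<and>
     teq3 scale (D_tensor_map Delta beta r) (r23r13 mu alpha beta r) \<and>
     teq3 scale (map_tensor_D alpha Delta r) (neg3 scale (r13r12 mu alpha beta r))"
  then have Delta_eq: "\<forall>a. teq2 scale (Delta a) (Delta_r scale mu alpha beta r a)"
    unfolding Delta_r_def by blast
  then show "\<forall>a. teq2 scale (Delta a) (Delta_r scale mu alpha beta r a)" .
  have "teq3 scale (D_tensor_map (Delta_r scale mu alpha beta r) beta r) (D_tensor_map Delta beta r)"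
    using Delta_eq by (simp add: teq3_D_tensor_map_cong teq3_sym)
  then have "teq3 scale (D_tensor_map (Delta_r scale mu alpha beta r) beta r) (r23r13 mu alpha beta r)"
    using H by (elim teq3_trans) simp
  then have "teq3 scale (A_r scale mu alpha beta r) []"
    by (simp add: A_r_zero_iff_D_tensor_map_Delta_r)
  moreover have "bihom_assoc_alg scale mu alpha beta"
    using H by (simp add: inf_bihom_bialg_def)
  ultimately show "quasitriangular_ibhb scale mu alpha beta r"
    using H by (simp add: quasitriangular_ibhbI)
qed

end
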